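(* There exist private information distinguishing debate games $B=(A,S,P,C_w,C_l)$ and $B'=(A,S,P,C'_w,C'_l)$ with $C'_w(s)\supseteq C_w(s)$ and $C'_l(s)\subseteq C_l(s)$ for all $s\in S$ such that the minimum possible error of a policy for $B'$ exceeds the minimum possible error of a policy for $B$.
   Context: Let $\delta$ be a special default action. A PIDDG is a tuple $(A,S,P,C_w,C_l)$ with $A$ finite, $\delta\notin A$, $S$ finite, $P$ a probability mass function on $S$, and $C_w,C_l:S\to\mathcal P(A)$. A policy is $M:\{1,2\}\times(A\cup\{\delta\})^2\to[0,1]$ with $M(1,a_1,a_2)+M(2,a_1,a_2)=1$. $G_1(B,M)$ is the following Bayesian game with agents $1,2$. Each agent has action set $A\cup\{\delta\}$ and type set $\mathcal P(A)$. A scenario $s\sim P$ is drawn, and agent 1 gets type $C_w(s)$ while agent 2 gets type $C_l(s)$. Payoffs are as follows: - if both agents play available actions ($a_i\in t_i\cup\{\delta\}$), agent $i$ gets $M(i,a_1,a_2)$; - if exactly one plays an unavailable action, it gets $0$ and the other gets $1$; - if both play unavailable actions, each gets $1/2$. $G_2(B,M)$ is the same with the types swapped (agent 1 gets $C_l(s)$, agent 2 gets $C_w(s)$). The error is $\frac{v_1(G_2(B,M))+v_2(G_1(B,M))}{2}$, where $v_i$ denotes the value of the zero-sum Bayesian game to agent $i$. A policy of minimum error always exists. *)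

theory Defs
  imports "HOL-Probability.Probability"
begin

text \<open>Actions are encoded as \<open>nat option\<close>: \<open>None\<close> is the default action \<delta>,
  \<open>Some a\<close> is the action a \<in> A (so \<delta> \<notin> A automatically).\<close>

definition acts :: "nat set \<Rightarrow> nat option set" where
  "acts A = insert None (Some ` A)"

definition available :: "nat set \<Rightarrow> nat option \<Rightarrow> bool" where
  "available t a \<longleftrightarrow> a = None \<or> (\<exists>x. a = Some x \<and> x \<in> t)"

definition piddg :: "nat set \<Rightarrow> nat set \<Rightarrow> (nat \<Rightarrow> real) \<Rightarrow> (nat \<Rightarrow> nat set) \<Rightarrow> (nat \<Rightarrow> nat set) \<Rightarrow> bool" where
  "piddg A S P Cw Cl \<longleftrightarrow> finite A \<and> finite S \<and> (\<forall>s\<in>S. 0 \<le> P s) \<and> (\<Sum>s\<in>S. P s) = 1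
     \<and> (\<forall>s\<in>S. Cw s \<subseteq> A \<and> Cl s \<subseteq> A)"

definition policies :: "nat set \<Rightarrow> (nat \<Rightarrow> nat option \<Rightarrow> nat option \<Rightarrow> real) set" where
  "policies A = {M. \<forall>a1\<in>acts A. \<forall>a2\<in>acts A.
      0 \<le> M 1 a1 a2 \<and> M 1 a1 a2 \<le> 1 \<and> 0 \<le> M 2 a1 a2 \<and> M 2 a1 a2 \<le> 1
      \<and> M 1 a1 a2 + M 2 a1 a2 = 1}"

definition payoff :: "(nat \<Rightarrow> nat option \<Rightarrow> nat option \<Rightarrow> real) \<Rightarrow> nat \<Rightarrow> nat set \<Rightarrow> nat set
    \<Rightarrow> nat option \<Rightarrow> nat option \<Rightarrow> real" where
  "payoff M i t1 t2 a1 a2 =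
     (if available t1 a1 \<and> available t2 a2 then M i a1 a2
      else if \<not> available t1 a1 \<and> \<not> available t2 a2 then 1/2
      else if (i = 1 \<longleftrightarrow> available t1 a1) then 1 else 0)"

definition strategies :: "nat set \<Rightarrow> (nat set \<Rightarrow> nat option pmf) set" where
  "strategies A = {\<sigma>. \<forall>t. set_pmf (\<sigma> t) \<subseteq> acts A}"

definition exp_payoff :: "nat set \<Rightarrow> nat set \<Rightarrow> (nat \<Rightarrow> real) \<Rightarrow> (nat \<Rightarrow> nat set) \<Rightarrow> (nat \<Rightarrow> nat set)
    \<Rightarrow> (nat \<Rightarrow> nat option \<Rightarrow> nat option \<Rightarrow> real) \<Rightarrow> nat
    \<Rightarrow> (nat set \<Rightarrow> nat option pmf) \<Rightarrow> (nat set \<Rightarrow> nat option pmf) \<Rightarrow> real" where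
  "exp_payoff A S P T1 T2 M i \<sigma>1 \<sigma>2 =
     (\<Sum>s\<in>S. P s * (\<Sum>a1\<in>acts A. \<Sum>a2\<in>acts A.
        pmf (\<sigma>1 (T1 s)) a1 * pmf (\<sigma>2 (T2 s)) a2 * payoff M i (T1 s) (T2 s) a1 a2))"

definition value1 where
  "value1 A S P T1 T2 M = (SUP \<sigma>1\<in>strategies A. INF \<sigma>2\<in>strategies A. exp_payoff A S P T1 T2 M 1 \<sigma>1 \<sigma>2)"

definition value2 where
  "value2 A S P T1 T2 M = (SUP \<sigma>2\<in>strategies A. INF \<sigma>1\<in>strategies A. exp_payoff A S P T1 T2 M 2 \<sigma>1 \<sigma>2)"

text \<open>error = (v_1(G_2(B,M)) + v_2(G_1(B,M)))/2; G_1 gives agent 1 type C_w, G_2 gives agent 1 type C_l.\<close>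
definition error where
  "error A S P Cw Cl M = (value1 A S P Cl Cw M + value2 A S P Cw Cl M) / 2"

definition min_error where
  "min_error A S P Cw Cl = (INF M\<in>policies A. error A S P Cw Cl M)"

end

theory Submission
  imports Defs
begin

text \<open>In \<open>B\<close> the winner can only claim the scenario \<open>s\<close> and the loser only \<open>s - 1\<close> (mod 3).
  A judge that upholds a claim \<open>x\<close> unless it is answered by \<open>x + 1\<close> (mod 3) makes the truthful
  winner unbeatable in either seat, so \<open>B\<close> has error 0.
  In \<open>B'\<close> the winner may claim anything, so its type reveals nothing, and a loser that stays
  silent or makes its claim with probability 1/2 each plays every action with overall probability
  at least 1/6.  The error of a policy \<open>M\<close> is the average of the loser's values in seat 1 under
  \<open>M\<close> and under the mirrored policy.  Against the hedging loser, whatever actions \<open>x\<close> (seat 1)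
  and \<open>y\<close> (seat 2) the winner uses, the loser collects at least \<open>M(1,x,y)/6\<close> in one game and
  \<open>M(2,x,y)/6\<close> in the other, i.e. 1/6 in total, so every policy of \<open>B'\<close> has error at least 1/12.\<close>

lemma pmf_weighted_sum_ge:
  assumes "finite A" "set_pmf q \<subseteq> A" "\<And>x. x \<in> A \<Longrightarrow> m \<le> c x"
  shows "m \<le> (\<Sum>x\<in>A. pmf q x * c x)"
proof -
  have "m = (\<Sum>x\<in>A. pmf q x * m)"
    using sum_pmf_eq_1[OF assms(1,2)] by (simp add: sum_distrib_right[symmetric])
  also have "\<dots> \<le> (\<Sum>x\<in>A. pmf q x * c x)"
    by (intro sum_mono mult_left_mono) (simp_all add: assms(3))
  finally show ?thesis .
qed

lemma pmf_weighted_sum_le: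
  assumes "finite A" "set_pmf q \<subseteq> A" "\<And>x. x \<in> A \<Longrightarrow> c x \<le> m"
  shows "(\<Sum>x\<in>A. pmf q x * c x) \<le> m"
  using pmf_weighted_sum_ge[of A q "-m" "\<lambda>x. - c x"] assms by (simp add: sum_negf)

lemma finite_acts: "finite A \<Longrightarrow> finite (acts A)"
  by (simp add: acts_def)

lemma payoff_bounds:
  assumes "M \<in> policies A" "i \<in> {1,2}" "a1 \<in> acts A" "a2 \<in> acts A"
  shows "0 \<le> payoff M i t1 t2 a1 a2 \<and> payoff M i t1 t2 a1 a2 \<le> 1"
  using assms unfolding payoff_def policies_def by auto

lemma exp_payoff_nonneg:
  assumes "\<forall>s\<in>S. 0 \<le> P s" "M \<in> policies A" "i \<in> {1,2}"
  shows "0 \<le> exp_payoff A S P T1 T2 M i \<sigma>1 \<sigma>2"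
  unfolding exp_payoff_def using assms payoff_bounds[OF assms(2,3)]
  by (intro sum_nonneg mult_nonneg_nonneg) auto

lemma exp_payoff_le_1:
  assumes "finite A" "\<forall>s\<in>S. 0 \<le> P s" "(\<Sum>s\<in>S. P s) = 1" "M \<in> policies A" "i \<in> {1,2}"
    and "\<sigma>1 \<in> strategies A" "\<sigma>2 \<in> strategies A"
  shows "exp_payoff A S P T1 T2 M i \<sigma>1 \<sigma>2 \<le> 1"
proof -
  have "(\<Sum>a1\<in>acts A. \<Sum>a2\<in>acts A.
          pmf (\<sigma>1 t1) a1 * pmf (\<sigma>2 t2) a2 * payoff M i t1 t2 a1 a2) \<le> 1" for t1 t2
  proof -
    have "(\<Sum>a1\<in>acts A. \<Sum>a2\<in>acts A. pmf (\<sigma>1 t1) a1 * pmf (\<sigma>2 t2) a2 * payoff M i t1 t2 a1 a2)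
        = (\<Sum>a1\<in>acts A. pmf (\<sigma>1 t1) a1 * (\<Sum>a2\<in>acts A. pmf (\<sigma>2 t2) a2 * payoff M i t1 t2 a1 a2))"
      by (simp add: sum_distrib_left mult.assoc)
    also have "\<dots> \<le> 1"
      using assms(6,7) payoff_bounds[OF assms(4,5)] finite_acts[OF assms(1)]
      by (intro pmf_weighted_sum_le) (auto simp: strategies_def)
    finally show ?thesis .
  qed
  then have "exp_payoff A S P T1 T2 M i \<sigma>1 \<sigma>2 \<le> (\<Sum>s\<in>S. P s * 1)"
    unfolding exp_payoff_def using assms(2) by (intro sum_mono mult_left_mono) auto
  then show ?thesis using assms(3) by simp
qed

lemma return_None_in_strategies: "(\<lambda>_. return_pmf None) \<in> strategies A"
  by (simp add: strategies_def acts_def)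

lemma le_value1I:
  assumes "finite A" "\<forall>s\<in>S. 0 \<le> P s" "(\<Sum>s\<in>S. P s) = 1" "M \<in> policies A"
    and "\<sigma> \<in> strategies A" "\<And>\<tau>. \<tau> \<in> strategies A \<Longrightarrow> v \<le> exp_payoff A S P T1 T2 M 1 \<sigma> \<tau>"
  shows "v \<le> value1 A S P T1 T2 M"
  unfolding value1_def
proof (rule cSUP_upper2[OF _ assms(5)])
  show "v \<le> (INF \<tau>\<in>strategies A. exp_payoff A S P T1 T2 M 1 \<sigma> \<tau>)"
    using return_None_in_strategies assms(6) by (intro cINF_greatest) auto
  have "(INF \<tau>\<in>strategies A. exp_payoff A S P T1 T2 M 1 \<sigma>' \<tau>) \<le> 1"
    if "\<sigma>' \<in> strategies A" for \<sigma>'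
    using return_None_in_strategies exp_payoff_le_1[OF assms(1-4), of 1 \<sigma>'] that
      exp_payoff_nonneg[OF assms(2,4), of 1]
    by (intro cINF_lower2[where x = "\<lambda>_. return_pmf None"] bdd_belowI2[where m = 0]) auto
  then show "bdd_above ((\<lambda>\<sigma>. INF \<tau>\<in>strategies A. exp_payoff A S P T1 T2 M 1 \<sigma> \<tau>) ` strategies A)"
    by (intro bdd_aboveI2)
qed

lemma value1_leI:
  assumes "\<forall>s\<in>S. 0 \<le> P s" "M \<in> policies A"
    and "\<tau> \<in> strategies A" "\<And>\<sigma>. \<sigma> \<in> strategies A \<Longrightarrow> exp_payoff A S P T1 T2 M 1 \<sigma> \<tau> \<le> v"
  shows "value1 A S P T1 T2 M \<le> v"
  unfolding value1_def
  using return_None_in_strategies assms exp_payoff_nonneg[OF assms(1,2), of 1]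
  by (intro cSUP_least cINF_lower2[OF _ assms(3)] bdd_belowI2[where m = 0]) auto

definition mirror_policy ::
    "(nat \<Rightarrow> nat option \<Rightarrow> nat option \<Rightarrow> real) \<Rightarrow> nat \<Rightarrow> nat option \<Rightarrow> nat option \<Rightarrow> real" where
  "mirror_policy M i a1 a2 = (if i = 1 then M 2 a2 a1 else M 1 a2 a1)"

lemma mirror_policy_1: "mirror_policy M 1 a1 a2 = M 2 a2 a1"
  by (simp add: mirror_policy_def)

lemma mirror_policy_in_policies: "M \<in> policies A \<Longrightarrow> mirror_policy M \<in> policies A"
  by (auto simp: policies_def mirror_policy_def add.commute)

lemma payoff_mirror_policy: "payoff M 2 t1 t2 a1 a2 = payoff (mirror_policy M) 1 t2 t1 a2 a1"
  by (simp add: payoff_def mirror_policy_def)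

lemma exp_payoff_mirror_policy:
  "exp_payoff A S P T1 T2 M 2 \<sigma>1 \<sigma>2 = exp_payoff A S P T2 T1 (mirror_policy M) 1 \<sigma>2 \<sigma>1"
  unfolding exp_payoff_def payoff_mirror_policy[of M]
  by (rule sum.cong[OF refl], subst sum.swap) (simp add: mult_ac)

lemma value2_eq_value1_mirror_policy:
  "value2 A S P T1 T2 M = value1 A S P T2 T1 (mirror_policy M)"
  by (simp add: value1_def value2_def exp_payoff_mirror_policy)

lemma error_eq_value1_mirror_policy:
  "error A S P Cw Cl M = (value1 A S P Cl Cw M + value1 A S P Cl Cw (mirror_policy M)) / 2"
  by (simp add: error_def value2_eq_value1_mirror_policy)

lemma error_nonneg:
  assumes "finite A" "\<forall>s\<in>S. 0 \<le> P s" "(\<Sum>s\<in>S. P s) = 1" "M \<in> policies A"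
  shows "0 \<le> error A S P Cw Cl M"
proof -
  have "0 \<le> value1 A S P Cl Cw M'" if "M' \<in> policies A" for M'
    using return_None_in_strategies exp_payoff_nonneg[OF assms(2) that, of 1]
    by (intro le_value1I[OF assms(1-3) that]) auto
  then show ?thesis
    using assms(4) mirror_policy_in_policies by (simp add: error_eq_value1_mirror_policy)
qed

lemma min_error_le_error:
  assumes "piddg A S P Cw Cl" "M \<in> policies A"
  shows "min_error A S P Cw Cl \<le> error A S P Cw Cl M"
  unfolding min_error_def using assms error_nonneg[of A S P]
  by (intro cINF_lower2[OF _ assms(2)] bdd_belowI2[where m = 0]) (auto simp: piddg_def)

lemma le_min_error:
  assumes "\<And>M. M \<in> policies A \<Longrightarrow> m \<le> error A S P Cw Cl M"
  shows "m \<le> min_error A S P Cw Cl"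
proof -
  have "(\<lambda>_ _ _. 1/2) \<in> policies A" by (simp add: policies_def)
  then show ?thesis unfolding min_error_def using assms by (intro cINF_greatest) auto
qed

lemma exp_payoff_against_uninformed:
  assumes "A \<subseteq> W" "\<forall>s\<in>S. \<forall>x\<in>set_pmf (\<sigma>1 (T1 s)). available (T1 s) x"
  shows "exp_payoff A S P T1 (\<lambda>_. W) M 1 \<sigma>1 \<sigma>2
    = (\<Sum>y\<in>acts A. pmf (\<sigma>2 W) y * (\<Sum>x\<in>acts A. (\<Sum>s\<in>S. P s * pmf (\<sigma>1 (T1 s)) x) * M 1 x y))"
proof -
  have "pmf (\<sigma>1 (T1 s)) x * payoff M 1 (T1 s) W x y = pmf (\<sigma>1 (T1 s)) x * M 1 x y"
    if "s \<in> S" "y \<in> acts A" for s x y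
  proof (cases "x \<in> set_pmf (\<sigma>1 (T1 s))")
    case True
    then show ?thesis
      using assms that by (auto simp: payoff_def available_def acts_def)
  qed (simp add: set_pmf_iff)
  then have "exp_payoff A S P T1 (\<lambda>_. W) M 1 \<sigma>1 \<sigma>2
      = (\<Sum>s\<in>S. \<Sum>x\<in>acts A. \<Sum>y\<in>acts A. P s * pmf (\<sigma>1 (T1 s)) x * pmf (\<sigma>2 W) y * M 1 x y)"
    unfolding exp_payoff_def sum_distrib_left
    by (intro sum.cong refl) (metis (no_types, lifting) mult.assoc mult.commute)
  also have "\<dots> = (\<Sum>x\<in>acts A. \<Sum>s\<in>S. \<Sum>y\<in>acts A. P s * pmf (\<sigma>1 (T1 s)) x * pmf (\<sigma>2 W) y * M 1 x y)"
    by (rule sum.swap)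
  also have "\<dots> = (\<Sum>x\<in>acts A. \<Sum>y\<in>acts A. \<Sum>s\<in>S. P s * pmf (\<sigma>1 (T1 s)) x * pmf (\<sigma>2 W) y * M 1 x y)"
    by (intro sum.cong refl sum.swap)
  also have "\<dots> = (\<Sum>y\<in>acts A. \<Sum>x\<in>acts A. \<Sum>s\<in>S. P s * pmf (\<sigma>1 (T1 s)) x * pmf (\<sigma>2 W) y * M 1 x y)"
    by (rule sum.swap)
  finally show ?thesis
    by (simp add: sum_distrib_left sum_distrib_right mult_ac)
qed

lemma value1_ge_against_uninformed:
  assumes "finite A" "\<forall>s\<in>S. 0 \<le> P s" "(\<Sum>s\<in>S. P s) = 1" "M \<in> policies A" "A \<subseteq> W"
    and "\<sigma> \<in> strategies A" "\<forall>s\<in>S. \<forall>x\<in>set_pmf (\<sigma> (T1 s)). available (T1 s) x"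
  shows "\<exists>y\<in>acts A. (\<Sum>x\<in>acts A. (\<Sum>s\<in>S. P s * pmf (\<sigma> (T1 s)) x) * M 1 x y)
           \<le> value1 A S P T1 (\<lambda>_. W) M"
proof -
  define h where "h y = (\<Sum>x\<in>acts A. (\<Sum>s\<in>S. P s * pmf (\<sigma> (T1 s)) x) * M 1 x y)" for y
  have "finite (acts A)" "acts A \<noteq> {}"
    using finite_acts[OF assms(1)] by (auto simp: acts_def)
  then obtain y where y: "y \<in> acts A" "\<And>y'. y' \<in> acts A \<Longrightarrow> h y \<le> h y'"
    by (metis ex_is_arg_min_if_finite is_arg_min_linorder)
  have "h y \<le> value1 A S P T1 (\<lambda>_. W) M"
  proof (rule le_value1I[OF assms(1-4,6)])
    fix \<tau> assume "\<tau> \<in> strategies A"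
    then show "h y \<le> exp_payoff A S P T1 (\<lambda>_. W) M 1 \<sigma> \<tau>"
      unfolding exp_payoff_against_uninformed[OF assms(5,7)] h_def[symmetric]
      using \<open>finite (acts A)\<close> y(2) by (intro pmf_weighted_sum_ge) (auto simp: strategies_def)
  qed
  then show ?thesis using y(1) unfolding h_def by blast
qed

lemma mirrored_weighted_policy_sum_ge:
  assumes "finite A" "M \<in> policies A" "x \<in> acts A" "y \<in> acts A"
    and "0 \<le> w" "\<And>z. z \<in> acts A \<Longrightarrow> w \<le> \<mu> z"
  shows "w \<le> (\<Sum>x'\<in>acts A. \<mu> x' * M 1 x' y) + (\<Sum>y'\<in>acts A. \<mu> y' * mirror_policy M 1 y' x)"
proof -
  have M_nonneg: "0 \<le> M i a b" if "i \<in> {1,2}" "a \<in> acts A" "b \<in> acts A" for i a b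
    using assms(2) that by (auto simp: policies_def)
  have M_sum: "M 1 x y + M 2 x y = 1"
    using assms(2-4) by (simp add: policies_def)
  have \<mu>: "0 \<le> \<mu> z" if "z \<in> acts A" for z
    using assms(5) assms(6)[OF that] by linarith
  have fin: "finite (acts A)" using finite_acts[OF assms(1)] .
  have "\<mu> x * M 1 x y \<le> (\<Sum>x'\<in>acts A. \<mu> x' * M 1 x' y)"
    using assms(3,4) fin by (intro member_le_sum) (auto intro!: mult_nonneg_nonneg \<mu> M_nonneg)
  moreover have "\<mu> y * M 2 x y \<le> (\<Sum>y'\<in>acts A. \<mu> y' * mirror_policy M 1 y' x)"
    using assms(3,4) fin unfolding mirror_policy_1
    by (intro member_le_sum) (auto intro!: mult_nonneg_nonneg \<mu> M_nonneg)
  moreover have "w \<le> \<mu> x * M 1 x y + \<mu> y * M 2 x y"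
  proof -
    have "w = w * M 1 x y + w * M 2 x y"
      using M_sum by (simp add: distrib_left[symmetric])
    also have "\<dots> \<le> \<mu> x * M 1 x y + \<mu> y * M 2 x y"
      using M_nonneg assms(3,4,6) by (intro add_mono mult_right_mono) auto
    finally show ?thesis .
  qed
  ultimately show ?thesis by linarith
qed

definition A3 :: "nat set" where "A3 = {0, 1, 2}"
definition P3 :: "nat \<Rightarrow> real" where "P3 s = 1/3"
definition Cw3 :: "nat \<Rightarrow> nat set" where "Cw3 s = {s}"
definition Cl3 :: "nat \<Rightarrow> nat set" where "Cl3 s = {(s + 2) mod 3}"

definition prevails :: "nat option \<Rightarrow> nat option \<Rightarrow> bool" where
  "prevails a1 a2 \<longleftrightarrow> (\<exists>x. a1 = Some x \<and> a2 \<noteq> Some ((x + 1) mod 3))"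

definition judge :: "nat \<Rightarrow> nat option \<Rightarrow> nat option \<Rightarrow> real" where
  "judge i a1 a2 = (if (i = 1) = prevails a1 a2 then 1 else 0)"

definition truthful :: "nat set \<Rightarrow> nat option pmf" where
  "truthful t = return_pmf (if t \<inter> A3 = {} then None else Some (Min (t \<inter> A3)))"

definition hedge :: "nat set \<Rightarrow> nat option pmf" where
  "hedge t = pmf_of_set (insert None (Some ` (t \<inter> A3)))"

lemma acts_A3: "acts A3 = {None, Some 0, Some 1, Some 2}"
  by (auto simp: acts_def A3_def)

lemma piddg_A3: "piddg A3 A3 P3 Cw3 Cl3" "piddg A3 A3 P3 (\<lambda>_. A3) Cl3"
  by (auto simp: piddg_def A3_def P3_def Cw3_def Cl3_def)

lemma judge_in_policies: "judge \<in> policies A3"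
  by (simp add: policies_def judge_def)

lemma truthful_in_strategies: "truthful \<in> strategies A3"
proof -
  have "Min (t \<inter> A3) \<in> A3" if "t \<inter> A3 \<noteq> {}" for t
    using Min_in[of "t \<inter> A3"] that by (auto simp: A3_def)
  then show ?thesis by (auto simp: strategies_def truthful_def acts_def)
qed

lemma value1_le_0_against_truthful:
  assumes "M \<in> {judge, mirror_policy judge}"
  shows "value1 A3 A3 P3 Cl3 Cw3 M \<le> 0"
proof (rule value1_leI[OF _ _ truthful_in_strategies])
  show "M \<in> policies A3"
    using assms judge_in_policies mirror_policy_in_policies by auto
  have loses: "payoff M 1 (Cl3 s) (Cw3 s) a (Some s) = 0" if "s \<in> A3" for s a
    using assms that
    by (cases a) (auto simp: A3_def Cl3_def Cw3_def payoff_def available_def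
                             judge_def mirror_policy_def prevails_def)
  have vanish: "pmf (\<sigma> (Cl3 s)) a1 * pmf (truthful (Cw3 s)) a2 * payoff M 1 (Cl3 s) (Cw3 s) a1 a2 = 0"
    if "s \<in> A3" for \<sigma> s a1 a2
    using loses[OF that] that by (cases "a2 = Some s") (auto simp: truthful_def Cw3_def A3_def)
  have inner_zero: "(\<Sum>a1\<in>acts A3. \<Sum>a2\<in>acts A3.
          pmf (\<sigma> (Cl3 s)) a1 * pmf (truthful (Cw3 s)) a2 * payoff M 1 (Cl3 s) (Cw3 s) a1 a2) = 0"
    if "s \<in> A3" for \<sigma> s
    by (intro sum.neutral ballI) (rule vanish[OF that])
  have "exp_payoff A3 A3 P3 Cl3 Cw3 M 1 \<sigma> truthful = 0" for \<sigma>
    unfolding exp_payoff_def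
    by (intro sum.neutral ballI) (simp only: inner_zero mult_zero_right)
  then show "exp_payoff A3 A3 P3 Cl3 Cw3 M 1 \<sigma> truthful \<le> 0" for \<sigma> by simp
qed (simp add: P3_def)

lemma error_judge: "error A3 A3 P3 Cw3 Cl3 judge \<le> 0"
  using value1_le_0_against_truthful[of judge] value1_le_0_against_truthful[of "mirror_policy judge"]
  by (simp add: error_eq_value1_mirror_policy)

lemma hedge_in_strategies: "hedge \<in> strategies A3"
  by (auto simp: strategies_def hedge_def acts_def A3_def)

lemma hedge_available: "\<forall>s\<in>A3. \<forall>x\<in>set_pmf (hedge (Cl3 s)). available (Cl3 s) x"
  by (auto simp: hedge_def available_def A3_def)

lemma hedge_marginal_ge:
  assumes "x \<in> acts A3"
  shows "1/6 \<le> (\<Sum>s\<in>A3. P3 s * pmf (hedge (Cl3 s)) x)"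
  using assms unfolding acts_A3 by (auto simp: A3_def P3_def hedge_def Cl3_def)

lemma error_ge_1_12:
  assumes "M \<in> policies A3"
  shows "1/12 \<le> error A3 A3 P3 (\<lambda>_. A3) Cl3 M"
proof -
  define \<mu> where "\<mu> x = (\<Sum>s\<in>A3. P3 s * pmf (hedge (Cl3 s)) x)" for x
  have bound: "\<exists>y\<in>acts A3. (\<Sum>x\<in>acts A3. \<mu> x * M' 1 x y) \<le> value1 A3 A3 P3 Cl3 (\<lambda>_. A3) M'"
    if "M' \<in> policies A3" for M'
    unfolding \<mu>_def using piddg_A3(2) that hedge_in_strategies hedge_available
    by (intro value1_ge_against_uninformed) (auto simp: piddg_def)
  obtain y1 where y1: "y1 \<in> acts A3"
    "(\<Sum>x\<in>acts A3. \<mu> x * M 1 x y1) \<le> value1 A3 A3 P3 Cl3 (\<lambda>_. A3) M"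
    using bound[OF assms] by blast
  obtain y2 where y2: "y2 \<in> acts A3"
    "(\<Sum>x\<in>acts A3. \<mu> x * mirror_policy M 1 x y2) \<le> value1 A3 A3 P3 Cl3 (\<lambda>_. A3) (mirror_policy M)"
    using bound[OF mirror_policy_in_policies[OF assms]] by blast
  have "1/6 \<le> (\<Sum>x\<in>acts A3. \<mu> x * M 1 x y1) + (\<Sum>x\<in>acts A3. \<mu> x * mirror_policy M 1 x y2)"
    using assms y1(1) y2(1) hedge_marginal_ge unfolding \<mu>_def
    by (intro mirrored_weighted_policy_sum_ge) (auto simp: A3_def)
  then show ?thesis
    using y1(2) y2(2) by (simp add: error_eq_value1_mirror_policy)
qed

theorem proposition3p5:
  shows "\<exists>A S P Cw Cl Cw' Cl'. piddg A S P Cw Cl \<and> piddg A S P Cw' Cl'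
     \<and> (\<forall>s\<in>S. Cw s \<subseteq> Cw' s \<and> Cl' s \<subseteq> Cl s)
     \<and> min_error A S P Cw' Cl' > min_error A S P Cw Cl"
proof (intro exI conjI)
  show "\<forall>s\<in>A3. Cw3 s \<subseteq> A3 \<and> Cl3 s \<subseteq> Cl3 s"
    by (auto simp: A3_def Cw3_def)
  have "min_error A3 A3 P3 Cw3 Cl3 \<le> 0"
    using min_error_le_error[OF piddg_A3(1) judge_in_policies] error_judge by linarith
  moreover have "1/12 \<le> min_error A3 A3 P3 (\<lambda>_. A3) Cl3"
    using error_ge_1_12 by (rule le_min_error)
  ultimately show "min_error A3 A3 P3 Cw3 Cl3 < min_error A3 A3 P3 (\<lambda>_. A3) Cl3"
    by linarith
qed (fact piddg_A3)+

end
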